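(* Run APAPC with $\eta=\frac1{4\tau L}$, $\theta=\frac1{\eta\lambda_{\max}(\mathbf{W})}$, $\alpha=\mu$, $\tau=\min\left\{1,\frac12\sqrt{\frac\mu L\frac{\lambda_{\max}(\mathbf{W})}{\lambda_{\min}^+(\mathbf{W})}}\right\}$, and define \[ \Psi^k := \frac1\eta\|x^k-x^*\|^2 + \Big\langle \big(\tfrac1\theta\mathbf{W}^\dagger - (1+\eta\alpha)^{-1}\eta\mathbf{I}\big)(y^k-y^* ),\,y^k-y^*\Big\rangle + \frac{2(1-\tau)}{\tau}\mathrm{D}_F(x_f^k,x^* ). \] Then for every $k\ge0$, \[ \Psi^{k+1}\le\left(1+\frac14\min\left\{\sqrt{\frac\mu L\frac{\lambda_{\min}^+(\mathbf{W})}{\lambda_{\max}(\mathbf{W})}},\ \frac{\lambda_{\min}^+(\mathbf{W})}{\lambda_{\max}(\mathbf{W})}\right\}\right)^{-1}\Psi^k. \]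
   Context: $F:\mathbb{R}^{nd}\to\mathbb{R}$ is differentiable, $\mu$-strongly convex and $L$-smooth, $0<\mu\le L$. $\mathbf{W}$ is a symmetric positive semidefinite $nd\times nd$ matrix whose kernel is the consensus space $\{(x_1,\dots,x_n)\in(\mathbb{R}^d)^n:x_1=\dots=x_n\}$, with largest eigenvalue $\lambda_{\max}(\mathbf{W})$ and smallest positive eigenvalue $\lambda_{\min}^+(\mathbf{W})$. $\mathbf{W}^\dagger$ is the inverse of $\mathbf{W}$ restricted to $\mathrm{range}(\mathbf{W})$. $x^*$ is the unique minimizer of $F$ over $\ker(\mathbf{W})$, $y^*:=-\nabla F(x^* )\in\mathrm{range}(\mathbf{W})$. $\mathrm{D}_F(u,v):=F(u)-F(v)-\langle\nabla F(v),u-v\rangle$. APAPC: given $x^0\in\mathbb{R}^{nd}$, $y^0\in\mathrm{range}(\mathbf{W})$, parameters $\eta,\theta,\alpha>0$, $\tau\in(0,1]$, set $x_f^0=x^0$ and for $k\ge0$: $x_g^k=\tau x^k+(1-\tau)x_f^k$; $x^{k+1/2}=(1+\eta\alpha)^{-1}(x^k-\eta(\nabla F(x_g^k)-\alpha x_g^k+y^k))$; $y^{k+1}=y^k+\theta\mathbf{W}x^{k+1/2}$; $x^{k+1}=(1+\eta\alpha)^{-1}(x^k-\eta(\nabla F(x_g^k)-\alpha x_g^k+y^{k+1}))$; $x_f^{k+1}=x_g^k+\frac{2\tau}{2-\tau}(x^{k+1}-x^k)$. *)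

theory Defs
  imports "HOL-Analysis.Analysis"
begin

text \<open>Points of (R^d)^n are modelled as elements of type real^'d^'n
  (n blocks, each in R^d); the norm/inner product is the Euclidean one on R^{nd}.\<close>

definition consensus :: "(real^'d^'n) set" where
  "consensus = {x. \<forall>i j. x $ i = x $ j}"

definition eigenvalues_of :: "('a::real_vector \<Rightarrow> 'a) \<Rightarrow> real set" where
  "eigenvalues_of W = {l. \<exists>v. v \<noteq> 0 \<and> W v = l *\<^sub>R v}"

definition lambda_max :: "('a::real_vector \<Rightarrow> 'a) \<Rightarrow> real" where
  "lambda_max W = Max (eigenvalues_of W)"

definition lambda_min_pos :: "('a::real_vector \<Rightarrow> 'a) \<Rightarrow> real" where
  "lambda_min_pos W = Min {l \<in> eigenvalues_of W. l > 0}"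

definition pinv :: "('a::real_vector \<Rightarrow> 'a) \<Rightarrow> 'a \<Rightarrow> 'a" where
  "pinv W y = (THE z. z \<in> range W \<and> W z = y)"

definition strongly_convex :: "real \<Rightarrow> ('a::real_inner \<Rightarrow> real) \<Rightarrow> bool" where
  "strongly_convex \<mu> F \<longleftrightarrow> convex_on UNIV (\<lambda>x. F x - \<mu> / 2 * (norm x)\<^sup>2)"

definition is_gradient :: "('a::real_inner \<Rightarrow> real) \<Rightarrow> ('a \<Rightarrow> 'a) \<Rightarrow> bool" where
  "is_gradient F gF \<longleftrightarrow> (\<forall>x. (F has_derivative (\<lambda>h. gF x \<bullet> h)) (at x))"

definition L_smooth :: "real \<Rightarrow> ('a::real_inner \<Rightarrow> 'a) \<Rightarrow> bool" where
  "L_smooth L gF \<longleftrightarrow> (\<forall>x y. norm (gF x - gF y) \<le> L * norm (x - y))"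

definition bregman :: "('a::real_inner \<Rightarrow> real) \<Rightarrow> ('a \<Rightarrow> 'a) \<Rightarrow> 'a \<Rightarrow> 'a \<Rightarrow> real" where
  "bregman F gF u v = F u - F v - gF v \<bullet> (u - v)"

end

theory Submission
  imports Defs
begin

text \<open>Expanding \<open>\<parallel>x\<^sup>k\<^sup>+\<^sup>1 - x\<^sup>*\<parallel>\<^sup>2\<close> with the primal
  update, and pairing the dual error with the extrapolated point \<open>x\<^sup>k\<^sup>+\<^sup>1\<^sup>/\<^sup>2\<close> (which only sees
  \<open>W\<close> through the dual step), gives an exact identity in which the dual error is measured by the
  \<open>W\<^sup>\<dagger>\<close>-weighted energy of \<open>\<Psi>\<close>. The remaining gradient term is rewritten by three-point identities
  for Bregman divergences and bounded by smoothness, strong convexity and cocoercivity of \<open>\<nabla>F\<close>.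
  What is left are negative multiples of \<open>\<parallel>x\<^sup>k\<^sup>+\<^sup>1 - x\<^sup>k\<parallel>\<^sup>2\<close>, \<open>\<parallel>x\<^sup>k\<^sup>+\<^sup>1 - x\<^sub>g\<^sup>k\<parallel>\<^sup>2\<close> and
  \<open>\<parallel>\<nabla>F(x\<^sub>g\<^sup>k) - \<nabla>F(x\<^sup>*)\<parallel>\<^sup>2\<close>. The primal update expresses \<open>y\<^sup>k\<^sup>+\<^sup>1 - y\<^sup>*\<close> through exactly these three
  quantities, and \<open>W\<^sup>\<dagger> \<le> 1 / \<lambda>\<^sub>m\<^sub>i\<^sub>n\<^sup>+\<close> on the range of \<open>W\<close>, so they absorb a \<open>\<delta>\<close>-fraction of the new
  dual energy; the choice of \<open>\<tau>\<close> makes \<open>\<delta>\<close> as large as the stated rate.\<close>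

section \<open>Smooth and strongly convex functions\<close>

lemma has_real_derivative_along_line:
  fixes F :: "'a::real_inner \<Rightarrow> real"
  assumes "is_gradient F gF"
  shows "((\<lambda>t. F (v + t *\<^sub>R h)) has_real_derivative (gF (v + t *\<^sub>R h) \<bullet> h)) (at t within S)"
proof -
  have line: "((\<lambda>t::real. v + t *\<^sub>R h) has_derivative (\<lambda>s. s *\<^sub>R h)) (at t within S)"
    by (auto intro!: derivative_eq_intros)
  have "(F has_derivative (\<lambda>k. gF (v + t *\<^sub>R h) \<bullet> k)) (at (v + t *\<^sub>R h))"
    using assms unfolding is_gradient_def by blast
  from has_derivative_compose[OF line this] show ?thesis
    unfolding has_field_derivative_def
    by (rule has_derivative_eq_rhs) (simp add: fun_eq_iff mult.commute)
qed

lemma L_smooth_bregman_le: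
  fixes F :: "'a::real_inner \<Rightarrow> real"
  assumes grad: "is_gradient F gF" and smooth: "L_smooth L gF"
  shows "bregman F gF u v \<le> L / 2 * (norm (u - v))\<^sup>2"
proof -
  define h where "h = u - v"
  define \<phi> where "\<phi> t = F (v + t *\<^sub>R h) - t * (gF v \<bullet> h) - L / 2 * t\<^sup>2 * (norm h)\<^sup>2" for t
  have deriv: "DERIV \<phi> t :> (gF (v + t *\<^sub>R h) \<bullet> h - gF v \<bullet> h - L * t * (norm h)\<^sup>2)" for t
    unfolding \<phi>_def
    by (rule derivative_eq_intros has_real_derivative_along_line[OF grad] refl)+
       (simp add: power2_eq_square)
  obtain z where z: "0 < z" "z < 1"
    and mvt: "\<phi> 1 - \<phi> 0 = gF (v + z *\<^sub>R h) \<bullet> h - gF v \<bullet> h - L * z * (norm h)\<^sup>2"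
    using MVT2[of 0 1 \<phi>, OF _ deriv] by auto
  have "gF (v + z *\<^sub>R h) \<bullet> h - gF v \<bullet> h = (gF (v + z *\<^sub>R h) - gF v) \<bullet> h"
    by (simp add: inner_diff_left)
  also have "\<dots> \<le> norm (gF (v + z *\<^sub>R h) - gF v) * norm h"
    by (rule norm_cauchy_schwarz)
  also have "\<dots> \<le> L * norm (z *\<^sub>R h) * norm h"
    using smooth unfolding L_smooth_def by (metis add_diff_cancel_left' mult_right_mono norm_ge_zero)
  also have "\<dots> = L * z * (norm h)\<^sup>2"
    using z by (simp add: power2_eq_square)
  finally have "\<phi> 1 \<le> \<phi> 0"
    using mvt by simp
  then show ?thesis
    unfolding \<phi>_def h_def bregman_def by simp
qed

lemma convex_on_gradient_tangent:
  fixes G :: "'a::real_inner \<Rightarrow> real"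
  assumes cvx: "convex_on UNIV G" and deriv: "\<And>x. (G has_derivative (\<lambda>h. dG x \<bullet> h)) (at x)"
  shows "G x + dG x \<bullet> (y - x) \<le> G y"
proof -
  define h where "h = y - x"
  define \<psi> where "\<psi> t = G (x + t *\<^sub>R h)" for t
  have "convex_on UNIV \<psi>"
  proof (rule convex_onI)
    fix s t u :: real
    assume u: "0 < u" "u < 1"
    have "\<psi> ((1 - u) *\<^sub>R s + u *\<^sub>R t) = G ((1 - u) *\<^sub>R (x + s *\<^sub>R h) + u *\<^sub>R (x + t *\<^sub>R h))"
      unfolding \<psi>_def by (simp add: algebra_simps)
    also have "\<dots> \<le> (1 - u) * G (x + s *\<^sub>R h) + u * G (x + t *\<^sub>R h)"
      using cvx u unfolding convex_on_def by auto
    finally show "\<psi> ((1 - u) *\<^sub>R s + u *\<^sub>R t) \<le> (1 - u) * \<psi> s + u * \<psi> t"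
      unfolding \<psi>_def .
  qed simp
  moreover have "(\<psi> has_field_derivative (dG x \<bullet> h)) (at 0)"
  proof -
    have line: "((\<lambda>t::real. x + t *\<^sub>R h) has_derivative (\<lambda>s. s *\<^sub>R h)) (at 0)"
      by (auto intro!: derivative_eq_intros)
    have "(G has_derivative (\<lambda>k. dG x \<bullet> k)) (at (x + 0 *\<^sub>R h))"
      using deriv by simp
    from has_derivative_compose[OF line this] show ?thesis
      unfolding has_field_derivative_def \<psi>_def
      by (rule has_derivative_eq_rhs) (simp add: fun_eq_iff mult.commute)
  qed
  ultimately have "\<psi> 1 - \<psi> 0 \<ge> (dG x \<bullet> h) * (1 - 0)"
    by (intro convex_on_imp_above_tangent) auto
  then show ?thesis
    unfolding \<psi>_def h_def by simp
qed

lemma strongly_convex_bregman_ge: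
  fixes F :: "'a::real_inner \<Rightarrow> real"
  assumes grad: "is_gradient F gF" and sconv: "strongly_convex \<mu> F"
  shows "\<mu> / 2 * (norm (u - v))\<^sup>2 \<le> bregman F gF u v"
proof -
  define G where "G x = F x - \<mu> / 2 * (x \<bullet> x)" for x
  have "convex_on UNIV G"
    using sconv unfolding strongly_convex_def G_def by (simp add: power2_norm_eq_inner)
  moreover have "(G has_derivative (\<lambda>h. (gF x - \<mu> *\<^sub>R x) \<bullet> h)) (at x)" for x
  proof -
    have "(G has_derivative (\<lambda>h. gF x \<bullet> h - \<mu> / 2 * (x \<bullet> h + h \<bullet> x))) (at x)"
      using grad unfolding G_def is_gradient_def by (auto intro!: derivative_eq_intros)
    then show ?thesis
      by (rule has_derivative_eq_rhs)
         (auto simp: inner_diff_left inner_diff_right inner_commute fun_eq_iff)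
  qed
  ultimately have "G v + (gF v - \<mu> *\<^sub>R v) \<bullet> (u - v) \<le> G u"
    by (rule convex_on_gradient_tangent)
  then show ?thesis
    unfolding G_def bregman_def
    by (simp add: algebra_simps inner_diff_left inner_diff_right inner_commute power2_norm_eq_inner)
qed

lemma strongly_convex_bregman_nonneg:
  fixes F :: "'a::real_inner \<Rightarrow> real"
  assumes "is_gradient F gF" and "strongly_convex \<mu> F" and "0 \<le> \<mu>"
  shows "0 \<le> bregman F gF u v"
proof -
  have "0 \<le> \<mu> / 2 * (norm (u - v))\<^sup>2"
    using assms(3) by simp
  with strongly_convex_bregman_ge[OF assms(1,2), of u v] show ?thesis
    by linarith
qed

lemma L_smooth_cocoercive:
  fixes F :: "'a::real_inner \<Rightarrow> real"
  assumes grad: "is_gradient F gF" and smooth: "L_smooth L gF" and L: "0 < L"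
    and nonneg: "\<And>u v. 0 \<le> bregman F gF u v"
  shows "(norm (gF x - gF y))\<^sup>2 / (2 * L) \<le> bregman F gF x y"
proof -
  define g where "g = gF x - gF y"
  \<comment> \<open>Compare F at the gradient step z from x with the tangent planes at x and at y.\<close>
  define z where "z = x - (1 / L) *\<^sub>R g"
  have zx: "z - x = - (1 / L) *\<^sub>R g"
    unfolding z_def by simp
  have "0 \<le> bregman F gF z y"
    by (rule nonneg)
  moreover have "bregman F gF z x \<le> (g \<bullet> g) / (2 * L)"
  proof -
    have "bregman F gF z x \<le> L / 2 * (norm (z - x))\<^sup>2"
      by (rule L_smooth_bregman_le[OF grad smooth])
    also have "\<dots> = (g \<bullet> g) / (2 * L)"
      unfolding zx using L by (simp add: power2_eq_square field_simps flip: power2_norm_eq_inner)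
    finally show ?thesis .
  qed
  moreover have "gF y \<bullet> z = gF y \<bullet> x - (1 / L) * (gF y \<bullet> g)"
    unfolding z_def by (simp add: inner_diff_right)
  moreover have "gF x \<bullet> z = gF x \<bullet> x - (1 / L) * (g \<bullet> g) - (1 / L) * (gF y \<bullet> g)"
    unfolding z_def g_def by (simp add: inner_diff_right inner_diff_left algebra_simps)
  ultimately have "(1 / L) * (g \<bullet> g) - (g \<bullet> g) / (2 * L) \<le> bregman F gF x y"
    unfolding bregman_def inner_diff_right by linarith
  also have "(1 / L) * (g \<bullet> g) - (g \<bullet> g) / (2 * L) = (g \<bullet> g) / (2 * L)"
    using L by (simp add: field_simps)
  finally show ?thesis
    unfolding g_def by (simp add: power2_norm_eq_inner)
qed

lemma nonneg_quadratic_linear_coeff_eq_0: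
  fixes b c :: real
  assumes nonneg: "\<And>t. 0 \<le> t * b + t\<^sup>2 * c" and "0 \<le> c"
  shows "b = 0"
proof (rule ccontr)
  assume "b \<noteq> 0"
  define t where "t = - b / (c + 1)"
  have e: "t * (c + 1) = - b"
    unfolding t_def using \<open>0 \<le> c\<close> by simp
  have "(c + 1)\<^sup>2 * (t * b + t\<^sup>2 * c) = (t * (c + 1)) * b * (c + 1) + (t * (c + 1))\<^sup>2 * c"
    by (simp add: algebra_simps power2_eq_square)
  also have "\<dots> = - b\<^sup>2"
    unfolding e by (simp add: algebra_simps power2_eq_square)
  finally have "(c + 1)\<^sup>2 * (t * b + t\<^sup>2 * c) < 0"
    using \<open>b \<noteq> 0\<close> by simp
  moreover have "0 \<le> (c + 1)\<^sup>2 * (t * b + t\<^sup>2 * c)"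
    using nonneg[of t] by simp
  ultimately show False
    by simp
qed

lemma nonneg_quadratic_discriminant:
  fixes A B C :: real
  assumes nonneg: "\<And>t. 0 \<le> A + 2 * t * B + t\<^sup>2 * C" and "0 \<le> C"
  shows "B\<^sup>2 \<le> A * C"
proof (cases "C = 0")
  case True
  show ?thesis
  proof (cases "B = 0")
    case False
    have "0 \<le> A + 2 * (-(A + 1) / (2 * B)) * B + (-(A + 1) / (2 * B))\<^sup>2 * C"
      by (rule nonneg)
    also have "\<dots> = -1"
      using False True by (simp add: field_simps)
    finally show ?thesis
      by simp
  qed (use True in simp)
next
  case False
  with \<open>0 \<le> C\<close> have C: "C > 0"
    by simp
  have "0 \<le> A + 2 * (- B / C) * B + (- B / C)\<^sup>2 * C"
    by (rule nonneg)
  also have "\<dots> = (A * C - B\<^sup>2) / C"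
    using C by (simp add: field_simps power2_eq_square)
  finally show ?thesis
    using C by (simp add: zero_le_divide_iff)
qed

lemma gradient_orthogonal_at_line_minimum:
  fixes F :: "'a::real_inner \<Rightarrow> real"
  assumes grad: "is_gradient F gF" and smooth: "L_smooth L gF" and "0 \<le> L"
    and min: "\<And>t::real. F x \<le> F (x + t *\<^sub>R h)"
  shows "gF x \<bullet> h = 0"
proof (rule nonneg_quadratic_linear_coeff_eq_0)
  fix t :: real
  have "bregman F gF (x + t *\<^sub>R h) x \<le> L / 2 * (norm (x + t *\<^sub>R h - x))\<^sup>2"
    by (rule L_smooth_bregman_le[OF grad smooth])
  then show "0 \<le> t * (gF x \<bullet> h) + t\<^sup>2 * (L / 2 * (norm h)\<^sup>2)"
    using min[of t] unfolding bregman_def by (simp add: power_mult_distrib algebra_simps)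
qed (use \<open>0 \<le> L\<close> in simp)

lemma inner_sum3_le:
  fixes u v w :: "'a::real_inner"
  shows "(u + v + w) \<bullet> (u + v + w) \<le> 2 * (u \<bullet> u) + 4 * (v \<bullet> v) + 4 * (w \<bullet> w)"
proof -
  have parallelogram: "(a + b) \<bullet> (a + b) \<le> 2 * (a \<bullet> a) + 2 * (b \<bullet> b)" for a b :: 'a
  proof -
    have "0 \<le> (a - b) \<bullet> (a - b)"
      by simp
    then show ?thesis
      by (simp add: inner_add_left inner_add_right inner_diff_left inner_diff_right inner_commute)
  qed
  have "(u + v + w) \<bullet> (u + v + w) \<le> 2 * (u \<bullet> u) + 2 * ((v + w) \<bullet> (v + w))"
    using parallelogram[of u "v + w"] by (simp add: add.assoc)
  also have "\<dots> \<le> 2 * (u \<bullet> u) + 2 * (2 * (v \<bullet> v) + 2 * (w \<bullet> w))"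
    using parallelogram[of v w] by simp
  finally show ?thesis
    by simp
qed

section \<open>Symmetric positive semidefinite operators\<close>

locale sym_psd_operator =
  fixes W :: "'a::euclidean_space \<Rightarrow> 'a"
  assumes linear: "linear W"
    and symmetric: "\<And>u v. W u \<bullet> v = u \<bullet> W v"
    and psd: "\<And>u. 0 \<le> W u \<bullet> u"
begin

lemma add: "W (u + v) = W u + W v"
  using linear by (rule linear_add)

lemma diff: "W (u - v) = W u - W v"
  using linear by (rule linear_diff)

lemma scaleR: "W (c *\<^sub>R u) = c *\<^sub>R W u"
  using linear by (rule linear_scale)

lemma zero: "W 0 = 0"
  using linear by (rule linear_0)

lemma subspace_range: "subspace (range W)"
  using linear_subspace_image[OF linear subspace_UNIV] by simp

lemma range_kernel_eq_0:
  assumes "u \<in> range W" "W u = 0"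
  shows "u = 0"
proof -
  obtain w where "u = W w"
    using assms(1) by auto
  then have "u \<bullet> u = w \<bullet> W u"
    using symmetric[of w u] by simp
  then show ?thesis
    using assms(2) by simp
qed

lemma range_orthogonal_decomposition:
  obtains y z where "y \<in> range W" "W z = 0" "\<And>w. z \<bullet> W w = 0" "x = y + z"
proof -
  obtain y z where y: "y \<in> span (range W)"
    and z: "\<And>w. w \<in> span (range W) \<Longrightarrow> orthogonal z w" and "x = y + z"
    using orthogonal_subspace_decomp_exists[of "range W" x] by blast
  have span: "span (range W) = range W"
    using subspace_range by simp
  have zW: "z \<bullet> W w = 0" for w
    using z[of "W w"] span unfolding orthogonal_def by auto
  have "W z \<bullet> W z = z \<bullet> W (W z)"
    by (rule symmetric)
  then have "W z = 0"
    using zW[of "W z"] by simp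
  with y span zW \<open>x = y + z\<close> show ?thesis
    using that by auto
qed

lemma orthogonal_kernel_imp_range:
  assumes "\<And>u. W u = 0 \<Longrightarrow> v \<bullet> u = 0"
  shows "v \<in> range W"
proof -
  obtain a b where a: "a \<in> range W" and b: "W b = 0" "\<And>w. b \<bullet> W w = 0" and v: "v = a + b"
    by (rule range_orthogonal_decomposition[of v]) (rule that, assumption+)
  have "a \<bullet> b = 0"
    using a b(2) by (auto simp: inner_commute)
  moreover have "v \<bullet> b = 0"
    using assms b(1) by simp
  ultimately have "b \<bullet> b = 0"
    using v by (simp add: inner_add_left)
  then show ?thesis
    using v a by simp
qed

lemma inj_on_range: "inj_on W (range W)"
proof (rule inj_onI)
  fix u v
  assume "u \<in> range W" "v \<in> range W" "W u = W v"
  then have "u - v \<in> range W" "W (u - v) = 0"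
    using subspace_range by (simp_all add: subspace_diff diff)
  then show "u = v"
    using range_kernel_eq_0 by (metis right_minus_eq)
qed

lemma pinv_eqI:
  assumes "z \<in> range W" "W z = y"
  shows "pinv W y = z"
  unfolding pinv_def
  by (rule the_equality) (use assms inj_on_range in \<open>auto dest: inj_onD\<close>)

lemma pinv:
  assumes "y \<in> range W"
  shows pinv_in_range: "pinv W y \<in> range W" and W_pinv: "W (pinv W y) = y"
proof -
  obtain w where "y = W w"
    using assms by auto
  obtain a b where "a \<in> range W" "W b = 0" "w = a + b"
    by (rule range_orthogonal_decomposition[of w])
  then have "a \<in> range W" "W a = y"
    using \<open>y = W w\<close> add by auto
  then show "pinv W y \<in> range W" "W (pinv W y) = y"
    using pinv_eqI by auto
qed

lemma pinv_diff:
  assumes "u \<in> range W" "v \<in> range W"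
  shows "pinv W (u - v) = pinv W u - pinv W v"
  by (rule pinv_eqI)
     (use assms pinv_in_range W_pinv subspace_range in \<open>simp_all add: subspace_diff diff\<close>)

lemma pinv_inner_commute:
  assumes "u \<in> range W" "v \<in> range W"
  shows "pinv W u \<bullet> v = u \<bullet> pinv W v"
proof -
  have "pinv W u \<bullet> v = pinv W u \<bullet> W (pinv W v)"
    using W_pinv[OF assms(2)] by simp
  also have "\<dots> = W (pinv W u) \<bullet> pinv W v"
    by (simp add: symmetric)
  also have "\<dots> = u \<bullet> pinv W v"
    using W_pinv[OF assms(1)] by simp
  finally show ?thesis .
qed

lemma finite_eigenvalues: "finite (eigenvalues_of W)"
proof -
  define E where "E = eigenvalues_of W"
  define ev where "ev l = (SOME v. v \<noteq> 0 \<and> W v = l *\<^sub>R v)" for l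
  have ev: "ev l \<noteq> 0" "W (ev l) = l *\<^sub>R ev l" if "l \<in> E" for l
  proof -
    have "\<exists>v. v \<noteq> 0 \<and> W v = l *\<^sub>R v"
      using that unfolding E_def eigenvalues_of_def by simp
    then show "ev l \<noteq> 0" "W (ev l) = l *\<^sub>R ev l"
      unfolding ev_def by (metis (mono_tags, lifting) someI_ex)+
  qed
  have inj: "inj_on ev E"
  proof (rule inj_onI)
    fix l1 l2
    assume l: "l1 \<in> E" "l2 \<in> E" "ev l1 = ev l2"
    then have "l1 *\<^sub>R ev l1 = l2 *\<^sub>R ev l1"
      using ev(2)[OF l(1)] ev(2)[OF l(2)] by metis
    then show "l1 = l2"
      using ev(1)[OF l(1)] by (metis scaleR_cancel_right)
  qed
  have "pairwise orthogonal (ev ` E)"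
  proof (rule pairwiseI)
    fix a b
    assume "a \<in> ev ` E" "b \<in> ev ` E" "a \<noteq> b"
    then obtain l1 l2 where l: "l1 \<in> E" "l2 \<in> E" "a = ev l1" "b = ev l2" "l1 \<noteq> l2"
      by blast
    have "l1 * (a \<bullet> b) = W a \<bullet> b"
      using ev(2)[OF l(1)] l(3) by simp
    also have "\<dots> = a \<bullet> W b"
      by (rule symmetric)
    also have "\<dots> = l2 * (a \<bullet> b)"
      using ev(2)[OF l(2)] l(4) by simp
    finally show "orthogonal a b"
      using l(5) unfolding orthogonal_def by (simp add: algebra_simps)
  qed
  moreover have "0 \<notin> ev ` E"
    using ev(1) by auto
  ultimately have "finite (ev ` E)"
    by (intro independent_imp_finite pairwise_orthogonal_independent)
  then show ?thesis
    unfolding E_def[symmetric] using inj by (rule finite_imageD)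
qed

lemma Rayleigh_extremal_imp_eigenvector:
  assumes S: "subspace S" and WS: "\<And>u. u \<in> S \<Longrightarrow> W u \<in> S" and v: "v \<in> S"
    and "s \<noteq> 0"
    and extremal: "\<And>u. u \<in> S \<Longrightarrow> 0 \<le> s * (c * (u \<bullet> u) - W u \<bullet> u)"
    and attained: "s * (c * (v \<bullet> v) - W v \<bullet> v) = 0"
  shows "W v = c *\<^sub>R v"
proof -
  have cv: "c * (v \<bullet> v) = W v \<bullet> v"
    using attained \<open>s \<noteq> 0\<close> by simp
  define h where "h = c *\<^sub>R v - W v"
  have h: "h \<in> S"
    unfolding h_def using S v WS by (simp add: subspace_diff subspace_scale)
  have "0 \<le> t * (2 * s * (h \<bullet> h)) + t\<^sup>2 * (s * (c * (h \<bullet> h) - W h \<bullet> h))" for t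
  proof -
    have "v + t *\<^sub>R h \<in> S"
      using S v h by (simp add: subspace_add subspace_scale)
    then have "0 \<le> s * (c * ((v + t *\<^sub>R h) \<bullet> (v + t *\<^sub>R h)) - W (v + t *\<^sub>R h) \<bullet> (v + t *\<^sub>R h))"
      by (rule extremal)
    also have "\<dots> = s * (c * (v \<bullet> v) - W v \<bullet> v) + 2 * t * s * (c * (v \<bullet> h) - W v \<bullet> h)
        + t\<^sup>2 * (s * (c * (h \<bullet> h) - W h \<bullet> h))"
      by (simp add: add scaleR inner_add_left inner_add_right symmetric[of h v] inner_commute[of h v]
          inner_commute[of "W v" h] algebra_simps power2_eq_square)
    also have "c * (v \<bullet> h) - W v \<bullet> h = h \<bullet> h"
      unfolding h_def by (simp add: inner_diff_left inner_diff_right inner_commute[of v "W v"] algebra_simps)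
    finally show ?thesis
      using cv by (simp add: algebra_simps)
  qed
  then have "2 * s * (h \<bullet> h) = 0"
    by (rule nonneg_quadratic_linear_coeff_eq_0) (use extremal[OF h] in simp)
  then show ?thesis
    unfolding h_def using \<open>s \<noteq> 0\<close> by simp
qed

lemma Rayleigh_bound_from_unit_sphere:
  assumes S: "subspace S" and unit: "\<And>u. u \<in> S \<Longrightarrow> norm u = 1 \<Longrightarrow> P (W u \<bullet> u)"
    and scale: "\<And>x r. r > 0 \<Longrightarrow> P x \<Longrightarrow> P' (r\<^sup>2 * x) (r\<^sup>2)" and P'_0: "P' 0 0"
    and "u \<in> S"
  shows "P' (W u \<bullet> u) (u \<bullet> u)"
proof (cases "u = 0")
  case True
  then show ?thesis
    using P'_0 by (simp add: zero)
next
  case False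
  define w where "w = (1 / norm u) *\<^sub>R u"
  have "w \<in> S" "norm w = 1"
    unfolding w_def using S \<open>u \<in> S\<close> False by (auto simp: subspace_scale)
  then have "P' ((norm u)\<^sup>2 * (W w \<bullet> w)) ((norm u)\<^sup>2)"
    using scale[OF _ unit] False by simp
  moreover have "(norm u)\<^sup>2 * (W w \<bullet> w) = W u \<bullet> u"
    unfolding w_def using False by (simp add: scaleR power2_eq_square)
  ultimately show ?thesis
    by (simp add: power2_norm_eq_inner)
qed

lemma lambda_max:
  shows lambda_max_eigenvalue: "lambda_max W \<in> eigenvalues_of W"
    and Rayleigh_le_lambda_max: "W u \<bullet> u \<le> lambda_max W * (u \<bullet> u)"
proof -
  have cont: "continuous_on (sphere 0 1) (\<lambda>u. W u \<bullet> u)"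
    using linear by (intro continuous_intros linear_continuous_on) (simp_all add: linear_conv_bounded_linear)
  obtain v where v: "v \<in> sphere 0 1" and vmax: "\<And>u. u \<in> sphere 0 1 \<Longrightarrow> W u \<bullet> u \<le> W v \<bullet> v"
    using continuous_attains_sup[OF compact_sphere _ cont] by auto
  define c where "c = W v \<bullet> v"
  have bound: "W u \<bullet> u \<le> c * (u \<bullet> u)" for u
    by (rule Rayleigh_bound_from_unit_sphere[of UNIV "\<lambda>x. x \<le> c" "\<lambda>x r. x \<le> c * r"])
       (use vmax in \<open>auto simp: c_def subspace_UNIV\<close>)
  have "v \<bullet> v = 1"
    using v by (simp add: dot_square_norm)
  then have "W v = c *\<^sub>R v"
    by (intro Rayleigh_extremal_imp_eigenvector[of UNIV v 1]) (use bound in \<open>simp_all add: c_def subspace_UNIV\<close>)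
  moreover have "v \<noteq> 0"
    using v by auto
  ultimately have c: "c \<in> eigenvalues_of W"
    unfolding eigenvalues_of_def by blast
  have "l \<le> c" if l: "l \<in> eigenvalues_of W" for l
  proof -
    obtain e where e: "e \<noteq> 0" "W e = l *\<^sub>R e"
      using l unfolding eigenvalues_of_def by blast
    then have "l * (e \<bullet> e) \<le> c * (e \<bullet> e)"
      using bound[of e] by simp
    then show ?thesis
      using e by simp
  qed
  then have "lambda_max W = c"
    unfolding lambda_max_def by (rule Max_eqI[OF finite_eigenvalues _ c])
  then show "lambda_max W \<in> eigenvalues_of W" "W u \<bullet> u \<le> lambda_max W * (u \<bullet> u)"
    using c bound by auto
qed

lemma lambda_max_nonneg: "0 \<le> lambda_max W"
proof -
  obtain v where "v \<noteq> 0" "W v = lambda_max W *\<^sub>R v"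
    using lambda_max_eigenvalue unfolding eigenvalues_of_def by blast
  then have "0 \<le> lambda_max W * (v \<bullet> v)" "0 < v \<bullet> v"
    using psd[of v] by simp_all
  then show ?thesis
    by (simp add: zero_le_mult_iff)
qed

lemma Rayleigh_min_on_range:
  assumes "\<exists>u. W u \<noteq> 0"
  obtains v where "v \<in> range W" "v \<bullet> v = 1"
    and "\<And>u. u \<in> range W \<Longrightarrow> (W v \<bullet> v) * (u \<bullet> u) \<le> W u \<bullet> u"
proof -
  define S where "S = sphere (0::'a) 1 \<inter> range W"
  obtain w where "W w \<noteq> 0"
    using assms by blast
  have "(1 / norm (W w)) *\<^sub>R W w \<in> range W"
    by (metis rangeI scaleR)
  then have "(1 / norm (W w)) *\<^sub>R W w \<in> S"
    unfolding S_def using \<open>W w \<noteq> 0\<close> by simp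
  then have nonempty: "S \<noteq> {}"
    by blast
  have compact: "compact S"
    unfolding S_def by (rule compact_Int_closed[OF compact_sphere closed_subspace[OF subspace_range]])
  have cont: "continuous_on S (\<lambda>u. W u \<bullet> u)"
    using linear by (intro continuous_intros linear_continuous_on) (simp_all add: linear_conv_bounded_linear)
  obtain v where v: "v \<in> S" and vmin: "\<And>u. u \<in> S \<Longrightarrow> W v \<bullet> v \<le> W u \<bullet> u"
    using continuous_attains_inf[OF compact nonempty cont] by blast
  have "(W v \<bullet> v) * (u \<bullet> u) \<le> W u \<bullet> u" if "u \<in> range W" for u
    by (rule Rayleigh_bound_from_unit_sphere[of "range W" "\<lambda>x. W v \<bullet> v \<le> x" "\<lambda>x r. (W v \<bullet> v) * r \<le> x"])
       (use vmin that subspace_range in \<open>auto simp: S_def mult.commute mult_right_mono\<close>)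
  moreover have "v \<in> range W" "v \<bullet> v = 1"
    using v by (auto simp: S_def dot_square_norm)
  ultimately show ?thesis
    using that by blast
qed

lemma lambda_min_pos:
  assumes nonzero: "\<exists>u. W u \<noteq> 0"
  shows lambda_min_pos_pos: "0 < lambda_min_pos W"
    and Rayleigh_ge_lambda_min_pos: "u \<in> range W \<Longrightarrow> lambda_min_pos W * (u \<bullet> u) \<le> W u \<bullet> u"
    and lambda_min_pos_le_lambda_max: "lambda_min_pos W \<le> lambda_max W"
proof -
  obtain v where v: "v \<in> range W" "v \<bullet> v = 1"
    and bound: "\<And>u. u \<in> range W \<Longrightarrow> (W v \<bullet> v) * (u \<bullet> u) \<le> W u \<bullet> u"
    using Rayleigh_min_on_range[OF nonzero] by blast
  define c where "c = W v \<bullet> v"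
  have "W v = c *\<^sub>R v"
    by (rule Rayleigh_extremal_imp_eigenvector[of "range W" v "-1"])
       (use v bound subspace_range in \<open>simp_all add: c_def\<close>)
  moreover have "v \<noteq> 0"
    using v by auto
  ultimately have c: "c \<in> eigenvalues_of W" and "c \<noteq> 0"
    unfolding eigenvalues_of_def using range_kernel_eq_0[OF v(1)] by (blast, force)
  then have c_pos: "0 < c"
    using psd[of v] unfolding c_def by simp
  have c_min: "c \<le> l" if l: "l \<in> {l \<in> eigenvalues_of W. l > 0}" for l
  proof -
    obtain e where e: "e \<noteq> 0" "W e = l *\<^sub>R e" "0 < l"
      using l unfolding eigenvalues_of_def by blast
    then have "e = W ((1 / l) *\<^sub>R e)"
      by (simp add: scaleR)
    then have "c * (e \<bullet> e) \<le> l * (e \<bullet> e)"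
      using bound[of e] e unfolding c_def by (metis inner_scaleR_left rangeI)
    then show ?thesis
      using e by simp
  qed
  have "lambda_min_pos W = c"
    unfolding lambda_min_pos_def by (rule Min_eqI[OF _ c_min]) (use finite_eigenvalues c c_pos in auto)
  moreover have "c \<le> lambda_max W"
    using Rayleigh_le_lambda_max[of v] v by (simp add: c_def)
  ultimately show "0 < lambda_min_pos W" "lambda_min_pos W \<le> lambda_max W"
    and "u \<in> range W \<Longrightarrow> lambda_min_pos W * (u \<bullet> u) \<le> W u \<bullet> u"
    using c_pos bound unfolding c_def by auto
qed

lemma inner_le_lambda_max_pinv:
  assumes "u \<in> range W"
  shows "u \<bullet> u \<le> lambda_max W * (pinv W u \<bullet> u)"
proof -
  define z where "z = pinv W u"
  have z: "W z = u"
    unfolding z_def using W_pinv[OF assms] .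
  define A where "A = W z \<bullet> z"
  define B where "B = W z \<bullet> W z"
  define C where "C = W (W z) \<bullet> W z"
  \<comment> \<open>Cauchy--Schwarz for the semi-inner product W, applied to z and W z.\<close>
  have "0 \<le> A + 2 * t * B + t\<^sup>2 * C" for t
  proof -
    have "0 \<le> W (z + t *\<^sub>R W z) \<bullet> (z + t *\<^sub>R W z)"
      by (rule psd)
    also have "\<dots> = A + 2 * t * B + t\<^sup>2 * C"
      unfolding A_def B_def C_def
      by (simp add: add scaleR inner_add_left inner_add_right symmetric[of "W z" z]
          inner_commute[of z "W z"] algebra_simps power2_eq_square)
    finally show ?thesis .
  qed
  then have "B\<^sup>2 \<le> A * C"
    by (rule nonneg_quadratic_discriminant) (simp add: C_def psd)
  also have "\<dots> \<le> A * (lambda_max W * B)"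
    unfolding A_def B_def C_def by (intro mult_left_mono Rayleigh_le_lambda_max psd)
  finally have "B * B \<le> (lambda_max W * A) * B"
    by (simp add: power2_eq_square algebra_simps)
  then have "B \<le> lambda_max W * A"
    using lambda_max_nonneg psd[of z]
    by (cases "B = 0") (auto simp: A_def B_def elim!: mult_right_le_imp_le)
  then show ?thesis
    unfolding A_def B_def z_def using z z_def by (simp add: inner_commute)
qed

lemma lambda_min_pos_pinv_le:
  assumes nonzero: "\<exists>u. W u \<noteq> 0" and "u \<in> range W"
  shows "lambda_min_pos W * (pinv W u \<bullet> u) \<le> u \<bullet> u"
proof -
  define z where "z = pinv W u"
  have z: "z \<in> range W" "W z = u"
    unfolding z_def using pinv_in_range W_pinv assms(2) by auto
  define A where "A = W z \<bullet> z"
  define B where "B = W z \<bullet> W z"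
  define lp where "lp = lambda_min_pos W"
  have "lp > 0"
    unfolding lp_def by (rule lambda_min_pos_pos[OF nonzero])
  have "A\<^sup>2 \<le> B * (z \<bullet> z)"
  proof -
    have "A\<^sup>2 \<le> (norm (W z) * norm z)\<^sup>2"
      unfolding A_def by (metis Cauchy_Schwarz_ineq2 abs_ge_zero power2_abs power_mono)
    then show ?thesis
      unfolding B_def by (simp add: power_mult_distrib dot_square_norm)
  qed
  then have "lp * A\<^sup>2 \<le> B * (lp * (z \<bullet> z))"
    using mult_left_mono[of _ _ lp] \<open>lp > 0\<close> by (simp add: algebra_simps)
  also have "\<dots> \<le> B * A"
    unfolding A_def B_def lp_def
    by (intro mult_left_mono Rayleigh_ge_lambda_min_pos[OF nonzero z(1)]) simp
  finally have "lp * A * A \<le> B * A"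
    by (simp add: power2_eq_square algebra_simps)
  then have "lp * A \<le> B"
    using psd[of z] by (cases "A = 0") (auto simp: A_def B_def elim!: mult_right_le_imp_le)
  then show ?thesis
    unfolding A_def B_def lp_def z_def using z z_def by (simp add: inner_commute)
qed

end

section \<open>Step sizes\<close>

text \<open>The step-size choices of the theorem in the variables \<open>r = \<lambda>\<^sub>m\<^sub>i\<^sub>n\<^sup>+ / \<lambda>\<^sub>m\<^sub>a\<^sub>x\<close> and
  \<open>q = sqrt (\<mu> / (L r))\<close>, with \<open>e\<close> standing for \<open>\<eta> \<mu>\<close>.\<close>

lemma apapc_rate_conditions:
  fixes r q \<tau> \<delta> e :: real
  assumes r: "0 < r" "r \<le> 1" and q: "0 < q" and "r * q\<^sup>2 \<le> 1"
    and tau: "\<tau> = min 1 (q / 2)" and delta: "\<delta> = r / 4 * min q 1" and e: "e = r * q\<^sup>2 / (4 * \<tau>)"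
  shows "0 < \<tau>" "\<tau> \<le> 1" "0 \<le> \<delta>" "\<delta> \<le> e" "2 * \<delta> * (1 - \<tau>) \<le> \<tau>"
    "\<delta> \<le> r / 4" "\<delta> \<le> \<tau> * r / 2" "e \<le> 1"
proof -
  show tau_pos: "0 < \<tau>" and "\<tau> \<le> 1"
    using tau q by simp_all
  show delta_nonneg: "0 \<le> \<delta>" and "\<delta> \<le> r / 4"
    unfolding delta using r q by (simp_all add: min_def)
  have "\<delta> \<le> e \<and> 2 * \<delta> * (1 - \<tau>) \<le> \<tau> \<and> \<delta> \<le> \<tau> * r / 2 \<and> e \<le> 1"
  proof (cases "2 \<le> q")
    case True
    then have "\<tau> = 1" "\<delta> = r / 4"
      unfolding tau delta by simp_all
    moreover have "4 \<le> q\<^sup>2"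
      using True by (metis power2_eq_square real_sqrt_four real_sqrt_le_iff sqrt_le_D)
    then have "r \<le> r * q\<^sup>2 / 4"
      using r by simp
    moreover have "e = r * q\<^sup>2 / 4"
      using e \<open>\<tau> = 1\<close> by simp
    ultimately have "\<delta> \<le> e \<and> e \<le> 1"
      using r \<open>r * q\<^sup>2 \<le> 1\<close> by (intro conjI; linarith)
    then show ?thesis
      using r \<open>\<tau> = 1\<close> \<open>\<delta> = r / 4\<close> by simp
  next
    case False
    then have "\<tau> = q / 2" "\<delta> \<le> r * q / 4"
      unfolding tau delta using r q by (simp_all add: min_def)
    moreover have "e = r * q / 2"
      using e \<open>\<tau> = q / 2\<close> q by (simp add: power2_eq_square)
    moreover have "\<tau> * r = r * q / 2"
      using \<open>\<tau> = q / 2\<close> by simp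
    moreover have "0 \<le> r * q" "r * q \<le> q"
      using r q by (simp_all add: mult_le_cancel_right1)
    ultimately have "\<delta> \<le> e \<and> 2 * \<delta> \<le> \<tau> \<and> \<delta> \<le> \<tau> * r / 2 \<and> e \<le> 1"
      using False by (intro conjI; linarith)
    moreover have "2 * \<delta> * (1 - \<tau>) \<le> 2 * \<delta>"
      using delta_nonneg tau_pos by (simp add: mult_left_le)
    ultimately show ?thesis
      by simp
  qed
  then show "\<delta> \<le> e" "2 * \<delta> * (1 - \<tau>) \<le> \<tau>" "\<delta> \<le> \<tau> * r / 2" "e \<le> 1"
    by simp_all
qed

lemma apapc_parameters:
  fixes \<mu> L lm lp \<tau> \<eta> \<delta> r :: real
  assumes mu: "0 < \<mu>" "\<mu> \<le> L" and lp: "0 < lp" "lp \<le> lm"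
    and r_def: "r = lp / lm"
    and tau_def: "\<tau> = min 1 (1/2 * sqrt (\<mu> / L * (lm / lp)))"
    and eta_def: "\<eta> = 1 / (4 * \<tau> * L)"
    and delta_def: "\<delta> = 1/4 * min (sqrt (\<mu> / L * (lp / lm))) (lp / lm)"
  shows "0 < \<tau>" "\<tau> \<le> 1" "0 \<le> \<delta>" "\<delta> \<le> \<eta> * \<mu>" "2 * \<delta> * (1 - \<tau>) \<le> \<tau>"
    "\<delta> \<le> r / 4" "\<delta> \<le> \<tau> * r / 2" "\<eta> * \<mu> \<le> 1"
proof -
  have L: "0 < L"
    using mu by simp
  have r: "0 < r" "r \<le> 1"
    using lp r_def by auto
  define q where "q = sqrt (\<mu> / L * (lm / lp))"
  have q: "0 < q"
    unfolding q_def using mu L lp by simp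
  have mu_L: "\<mu> / L = r * q\<^sup>2"
    unfolding q_def r_def using mu L lp by simp
  have "(r * q)\<^sup>2 = \<mu> / L * (lp / lm)"
    unfolding r_def[symmetric] mu_L by (simp add: power2_eq_square)
  then have "sqrt (\<mu> / L * (lp / lm)) = r * q"
    by (rule real_sqrt_unique) (use r q in simp)
  then have delta: "\<delta> = r / 4 * min q 1"
    unfolding delta_def r_def[symmetric] using r by (simp add: min_def)
  have tau: "\<tau> = min 1 (q / 2)"
    unfolding tau_def q_def by simp
  then have "0 < \<tau>"
    using q by simp
  then have "\<eta> * \<mu> = r * q\<^sup>2 / (4 * \<tau>)"
    unfolding eta_def mu_L[symmetric] using L by (simp add: field_simps)
  moreover have "r * q\<^sup>2 \<le> 1"
    using mu mu_L by (simp flip: mu_L)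
  ultimately show "0 < \<tau>" "\<tau> \<le> 1" "0 \<le> \<delta>" "\<delta> \<le> \<eta> * \<mu>" "2 * \<delta> * (1 - \<tau>) \<le> \<tau>"
    "\<delta> \<le> r / 4" "\<delta> \<le> \<tau> * r / 2" "\<eta> * \<mu> \<le> 1"
    using apapc_rate_conditions[OF r q _ tau delta] by simp_all
qed

section \<open>One step of APAPC\<close>

definition apapc_dual_energy :: "('a::real_inner \<Rightarrow> 'a) \<Rightarrow> real \<Rightarrow> real \<Rightarrow> real \<Rightarrow> 'a \<Rightarrow> real" where
  "apapc_dual_energy W \<mu> \<eta> \<theta> v = ((1 / \<theta>) *\<^sub>R pinv W v - (inverse (1 + \<eta> * \<mu>) * \<eta>) *\<^sub>R v) \<bullet> v"

text \<open>The potential \<open>\<Psi>\<close> of the paper, with \<open>\<alpha> = \<mu>\<close> and \<open>y\<^sup>* = - \<nabla>F(x\<^sup>*)\<close>.\<close>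

definition apapc_potential ::
    "('a::real_inner \<Rightarrow> real) \<Rightarrow> ('a \<Rightarrow> 'a) \<Rightarrow> ('a \<Rightarrow> 'a) \<Rightarrow> real \<Rightarrow> real \<Rightarrow> real \<Rightarrow> real \<Rightarrow>
      'a \<Rightarrow> 'a \<Rightarrow> 'a \<Rightarrow> 'a \<Rightarrow> real" where
  "apapc_potential F gF W \<mu> \<eta> \<theta> \<tau> xs x y xf =
     1 / \<eta> * (norm (x - xs))\<^sup>2 + apapc_dual_energy W \<mu> \<eta> \<theta> (y - - gF xs)
     + 2 * (1 - \<tau>) / \<tau> * bregman F gF xf xs"

text \<open>\<open>xs\<close> is \<open>x\<^sup>*\<close>; \<open>x, xf, y\<close> are \<open>x\<^sup>k, x\<^sub>f\<^sup>k, y\<^sup>k\<close>; and \<open>xg, xh, y1, x1, xf1\<close> are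
  \<open>x\<^sub>g\<^sup>k, x\<^sup>k\<^sup>+\<^sup>1\<^sup>/\<^sup>2, y\<^sup>k\<^sup>+\<^sup>1, x\<^sup>k\<^sup>+\<^sup>1, x\<^sub>f\<^sup>k\<^sup>+\<^sup>1\<close>.\<close>

locale apapc_step = sym_psd_operator W
  for W :: "'a::euclidean_space \<Rightarrow> 'a" +
  fixes F :: "'a \<Rightarrow> real" and gF :: "'a \<Rightarrow> 'a"
    and \<mu> L \<eta> \<theta> \<tau> :: real
    and xs x xf y xg xh y1 x1 xf1 :: 'a
  assumes grad: "is_gradient F gF" and smooth: "L_smooth L gF" and sconv: "strongly_convex \<mu> F"
    and mu_pos: "0 < \<mu>" and mu_le_L: "\<mu> \<le> L"
    and W_nonzero: "\<exists>u. W u \<noteq> 0"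
    and tau_pos: "0 < \<tau>" and tau_le_1: "\<tau> \<le> 1"
    and eta_def: "\<eta> = 1 / (4 * \<tau> * L)"
    and theta_def: "\<theta> = 1 / (\<eta> * lambda_max W)"
    and W_xs: "W xs = 0" and ys_range: "- gF xs \<in> range W" and y_range: "y \<in> range W"
    and xg_def: "xg = \<tau> *\<^sub>R x + (1 - \<tau>) *\<^sub>R xf"
    and xh_def: "xh = inverse (1 + \<eta> * \<mu>) *\<^sub>R (x - \<eta> *\<^sub>R (gF xg - \<mu> *\<^sub>R xg + y))"
    and y1_def: "y1 = y + \<theta> *\<^sub>R W xh"
    and x1_def: "x1 = inverse (1 + \<eta> * \<mu>) *\<^sub>R (x - \<eta> *\<^sub>R (gF xg - \<mu> *\<^sub>R xg + y1))"
    and xf1_def: "xf1 = xg + (2 * \<tau> / (2 - \<tau>)) *\<^sub>R (x1 - x)"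
begin

abbreviation ys :: 'a where
  "ys \<equiv> - gF xs"

abbreviation dual_energy :: "'a \<Rightarrow> real" where
  "dual_energy \<equiv> apapc_dual_energy W \<mu> \<eta> \<theta>"

lemma L_pos: "0 < L"
  using mu_pos mu_le_L by simp

lemma eta_pos: "0 < \<eta>"
  unfolding eta_def using tau_pos L_pos by simp

lemma lambda_max_pos: "0 < lambda_max W"
  using lambda_min_pos_pos[OF W_nonzero] lambda_min_pos_le_lambda_max[OF W_nonzero] by simp

lemma eta_mu_pos: "0 < \<eta> * \<mu>"
  using eta_pos mu_pos by simp

lemma theta_pos: "0 < \<theta>"
  unfolding theta_def using eta_pos lambda_max_pos by simp

lemma inverse_theta: "1 / \<theta> = \<eta> * lambda_max W"
  unfolding theta_def by simp

lemma dual_energy_eq: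
  "dual_energy v = (1 / \<theta>) * (pinv W v \<bullet> v) - (inverse (1 + \<eta> * \<mu>) * \<eta>) * (v \<bullet> v)"
  unfolding apapc_dual_energy_def by (simp add: inner_diff_left)

lemma dual_step_in_range: "y1 - y \<in> range W"
  unfolding y1_def by (simp add: scaleR[symmetric])

lemma dual_errors_in_range: "y - ys \<in> range W" "y1 - ys \<in> range W"
proof -
  show "y - ys \<in> range W"
    using subspace_range y_range ys_range by (rule subspace_diff)
  with subspace_range dual_step_in_range have "(y1 - y) + (y - ys) \<in> range W"
    by (rule subspace_add)
  then show "y1 - ys \<in> range W"
    by simp
qed

lemma primal_step: "x1 - x = - \<eta> *\<^sub>R ((gF xg - gF xs) + \<mu> *\<^sub>R (x1 - xg) + (y1 - ys))"
proof -
  have "1 + \<eta> * \<mu> \<noteq> 0"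
    using eta_mu_pos by simp
  then have "(1 + \<eta> * \<mu>) *\<^sub>R x1 = x - \<eta> *\<^sub>R (gF xg - \<mu> *\<^sub>R xg + y1)"
    unfolding x1_def by simp
  then show ?thesis
    by (simp add: algebra_simps)
qed

lemma primal_correction: "x1 - xh = - (inverse (1 + \<eta> * \<mu>) * \<eta>) *\<^sub>R (y1 - y)"
  unfolding x1_def xh_def by (simp add: algebra_simps)

text \<open>This is where the extrapolated point \<open>xh\<close> enters: as \<open>W xs = 0\<close>, pairing it with the dual
  error gives the \<open>W\<^sup>\<dagger>\<close>-inner product with the dual step.\<close>

lemma dual_error_inner_extrapolation:
  "(y1 - ys) \<bullet> (xh - xs) = (1 / \<theta>) * (pinv W (y1 - ys) \<bullet> (y1 - y))"
proof -
  have "(y1 - ys) \<bullet> (xh - xs) = pinv W (y1 - ys) \<bullet> W (xh - xs)"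
    using W_pinv[OF dual_errors_in_range(2)] symmetric[of "pinv W (y1 - ys)" "xh - xs"] by simp
  also have "W (xh - xs) = (1 / \<theta>) *\<^sub>R (y1 - y)"
    unfolding y1_def using W_xs theta_pos by (simp add: diff)
  finally show ?thesis
    by simp
qed

lemma dual_cross_identity:
  "2 * ((y1 - ys) \<bullet> (x1 - xs)) = dual_energy (y1 - ys) + dual_energy (y1 - y) - dual_energy (y - ys)"
proof -
  define c where "c = inverse (1 + \<eta> * \<mu>) * \<eta>"
  define p1 where "p1 = pinv W (y1 - ys)"
  define p0 where "p0 = pinv W (y - ys)"
  have pinv_step: "pinv W (y1 - y) = p1 - p0"
    unfolding p1_def p0_def using pinv_diff[OF dual_errors_in_range(2,1)] by simp
  have p0_p1: "p0 \<bullet> (y1 - ys) = p1 \<bullet> (y - ys)"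
    unfolding p0_def p1_def using pinv_inner_commute[OF dual_errors_in_range] by (simp add: inner_commute)
  have "x1 - xs = (xh - xs) - c *\<^sub>R (y1 - y)"
    using primal_correction unfolding c_def by (simp add: algebra_simps)
  then have "2 * ((y1 - ys) \<bullet> (x1 - xs)) = 2 * ((y1 - ys) \<bullet> (xh - xs)) - c * (2 * ((y1 - ys) \<bullet> (y1 - y)))"
    by (simp add: inner_diff_right)
  also have "\<dots> = (1 / \<theta>) * (2 * (p1 \<bullet> (y1 - y))) - c * (2 * ((y1 - ys) \<bullet> (y1 - y)))"
    unfolding dual_error_inner_extrapolation p1_def by simp
  also have "2 * (p1 \<bullet> (y1 - y)) = p1 \<bullet> (y1 - ys) + pinv W (y1 - y) \<bullet> (y1 - y) - p0 \<bullet> (y - ys)"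
  proof -
    have "2 * (p1 \<bullet> (a - b)) = p1 \<bullet> a + (p1 - p0) \<bullet> (a - b) - p0 \<bullet> b"
      if "p0 \<bullet> a = p1 \<bullet> b" for a b
      using that by (simp add: inner_diff_left inner_diff_right algebra_simps)
    from this[OF p0_p1] show ?thesis
      unfolding pinv_step by simp
  qed
  also have "2 * ((y1 - ys) \<bullet> (y1 - y)) = (y1 - ys) \<bullet> (y1 - ys) + (y1 - y) \<bullet> (y1 - y) - (y - ys) \<bullet> (y - ys)"
  proof -
    have "2 * (a \<bullet> (a - b)) = a \<bullet> a + (a - b) \<bullet> (a - b) - b \<bullet> b" for a b :: 'a
      by (simp add: inner_diff_left inner_diff_right inner_commute)
    from this[of "y1 - ys" "y - ys"] show ?thesis
      by simp
  qed
  finally show ?thesis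
    unfolding dual_energy_eq p1_def p0_def c_def by (simp add: algebra_simps)
qed

lemma distance_identity:
  "(1 + \<eta> * \<mu>) * ((x1 - xs) \<bullet> (x1 - xs)) + \<eta> * dual_energy (y1 - ys)
     = (x - xs) \<bullet> (x - xs) + \<eta> * dual_energy (y - ys) - \<eta> * dual_energy (y1 - y)
       - (x1 - x) \<bullet> (x1 - x) - \<eta> * \<mu> * ((x1 - xg) \<bullet> (x1 - xg))
       + \<eta> * \<mu> * ((xg - xs) \<bullet> (xg - xs)) - 2 * \<eta> * ((gF xg - gF xs) \<bullet> (x1 - xs))"
proof -
  have sq: "2 * (c \<bullet> a) = a \<bullet> a + c \<bullet> c - b \<bullet> b" if "c = a - b" for a b c :: 'a
    unfolding that by (simp add: inner_diff_left inner_diff_right inner_commute)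
  define d1 d0 dg G dy1 where "d1 = x1 - xs" and "d0 = x - xs" and "dg = xg - xs"
    and "G = gF xg - gF xs" and "dy1 = y1 - ys"
  have step: "x1 - x = - \<eta> *\<^sub>R (G + \<mu> *\<^sub>R (x1 - xg) + dy1)"
    unfolding G_def dy1_def by (rule primal_step)
  have "2 * ((x1 - x) \<bullet> d1) = - 2 * \<eta> * (G \<bullet> d1) - \<eta> * \<mu> * (2 * ((x1 - xg) \<bullet> d1))
      - \<eta> * (2 * (dy1 \<bullet> d1))"
    unfolding step by (simp add: inner_add_left algebra_simps)
  also have "2 * ((x1 - xg) \<bullet> d1) = d1 \<bullet> d1 + (x1 - xg) \<bullet> (x1 - xg) - dg \<bullet> dg"
    by (rule sq) (simp add: d1_def dg_def)
  also have "2 * (dy1 \<bullet> d1) = dual_energy dy1 + dual_energy (y1 - y) - dual_energy (y - ys)"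
    unfolding dy1_def d1_def by (rule dual_cross_identity)
  finally have "2 * ((x1 - x) \<bullet> d1) = - 2 * \<eta> * (G \<bullet> d1) - \<eta> * \<mu> * (d1 \<bullet> d1)
      - \<eta> * \<mu> * ((x1 - xg) \<bullet> (x1 - xg)) + \<eta> * \<mu> * (dg \<bullet> dg)
      - \<eta> * dual_energy dy1 - \<eta> * dual_energy (y1 - y) + \<eta> * dual_energy (y - ys)"
    by (simp add: algebra_simps)
  moreover have "2 * ((x1 - x) \<bullet> d1) = d1 \<bullet> d1 + (x1 - x) \<bullet> (x1 - x) - d0 \<bullet> d0"
    by (rule sq) (simp add: d1_def d0_def)
  ultimately show ?thesis
    unfolding d1_def [symmetric] d0_def [symmetric] dg_def [symmetric] G_def [symmetric] dy1_def [symmetric]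
    by (simp add: algebra_simps)
qed

lemma three_point_identity:
  "- 2 * ((gF xg - gF xs) \<bullet> (x1 - xs))
     = - ((2 - \<tau>) / \<tau> * bregman F gF xf1 xs) + (2 - \<tau>) / \<tau> * bregman F gF xf1 xg
       - bregman F gF xg xs - 2 * bregman F gF xs xg
       + 2 * (1 - \<tau>) / \<tau> * bregman F gF xf xs - 2 * (1 - \<tau>) / \<tau> * bregman F gF xf xg"
proof -
  define G where "G = gF xg - gF xs"
  have "2 - \<tau> \<noteq> 0"
    using tau_le_1 by simp
  have g1: "G \<bullet> (x1 - xs) = G \<bullet> (x1 - x) + G \<bullet> (x - xs)"
    by (simp add: inner_diff_right)
  have "x1 - x = ((2 - \<tau>) / (2 * \<tau>)) *\<^sub>R (xf1 - xg)"
    unfolding xf1_def using tau_pos \<open>2 - \<tau> \<noteq> 0\<close> by simp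
  then have g2: "G \<bullet> (x1 - x) = ((2 - \<tau>) / (2 * \<tau>)) * (G \<bullet> (xf1 - xg))"
    by simp
  have "\<tau> * (G \<bullet> (x - xs)) = G \<bullet> (xg - xs) - (1 - \<tau>) * (G \<bullet> (xf - xs))"
    unfolding xg_def by (simp add: algebra_simps inner_diff_right)
  then have g3: "G \<bullet> (x - xs) = (G \<bullet> (xg - xs) - (1 - \<tau>) * (G \<bullet> (xf - xs))) / \<tau>"
    using tau_pos by (simp add: field_simps)
  have g4: "G \<bullet> (xf - xs) = G \<bullet> (xf - xg) + G \<bullet> (xg - xs)"
    by (simp add: inner_diff_right)
  have g5: "G \<bullet> (xf - xg) = bregman F gF xf xs - bregman F gF xf xg - bregman F gF xg xs"
    and g6: "G \<bullet> (xg - xs) = bregman F gF xg xs + bregman F gF xs xg"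
    and g7: "G \<bullet> (xf1 - xg) = bregman F gF xf1 xs - bregman F gF xf1 xg - bregman F gF xg xs"
    unfolding G_def bregman_def by (simp_all add: inner_diff_left inner_diff_right inner_commute)
  show ?thesis
    unfolding G_def[symmetric] g1 g2 g3 g4 g5 g6 g7
    using tau_pos \<open>2 - \<tau> \<noteq> 0\<close> by (simp add: field_simps)
qed

lemma gradient_term_le:
  "- 2 * ((gF xg - gF xs) \<bullet> (x1 - xs)) + \<mu> * ((xg - xs) \<bullet> (xg - xs))
     \<le> - ((2 - \<tau>) / \<tau> * bregman F gF xf1 xs) + 2 * (1 - \<tau>) / \<tau> * bregman F gF xf xs
       + 2 * \<tau> * L / (2 - \<tau>) * ((x1 - x) \<bullet> (x1 - x))
       - (gF xg - gF xs) \<bullet> (gF xg - gF xs) / (2 * L)"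
proof -
  have nonneg: "0 \<le> bregman F gF u v" for u v
    using strongly_convex_bregman_nonneg[OF grad sconv] mu_pos by simp
  have "2 - \<tau> > 0"
    using tau_le_1 by simp
  have "(2 - \<tau>) / \<tau> * bregman F gF xf1 xg \<le> (2 - \<tau>) / \<tau> * (L / 2 * (norm (xf1 - xg))\<^sup>2)"
    by (intro mult_left_mono L_smooth_bregman_le[OF grad smooth]) (use tau_pos \<open>2 - \<tau> > 0\<close> in simp)
  also have "(norm (xf1 - xg))\<^sup>2 = (2 * \<tau> / (2 - \<tau>))\<^sup>2 * ((x1 - x) \<bullet> (x1 - x))"
    unfolding xf1_def by (simp add: power_mult_distrib power_divide power2_norm_eq_inner)
  also have "(2 - \<tau>) / \<tau> * (L / 2 * ((2 * \<tau> / (2 - \<tau>))\<^sup>2 * ((x1 - x) \<bullet> (x1 - x))))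
      = ((2 - \<tau>) / \<tau> * (2 * \<tau> / (2 - \<tau>))) * (L / 2) * (2 * \<tau> / (2 - \<tau>)) * ((x1 - x) \<bullet> (x1 - x))"
    by (simp only: power2_eq_square mult_ac)
  also have "(2 - \<tau>) / \<tau> * (2 * \<tau> / (2 - \<tau>)) = 2"
    using tau_pos \<open>2 - \<tau> > 0\<close> by (simp add: field_simps)
  also have "2 * (L / 2) * (2 * \<tau> / (2 - \<tau>)) = 2 * \<tau> * L / (2 - \<tau>)"
    by simp
  finally have "(2 - \<tau>) / \<tau> * bregman F gF xf1 xg \<le> 2 * \<tau> * L / (2 - \<tau>) * ((x1 - x) \<bullet> (x1 - x))" .
  moreover have "0 \<le> 2 * (1 - \<tau>) / \<tau> * bregman F gF xf xg"
    using tau_pos tau_le_1 nonneg by simp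
  moreover have "\<mu> * ((xg - xs) \<bullet> (xg - xs)) \<le> bregman F gF xg xs + bregman F gF xs xg"
    using strongly_convex_bregman_ge[OF grad sconv, of xg xs] strongly_convex_bregman_ge[OF grad sconv, of xs xg]
    by (simp add: power2_norm_eq_inner norm_minus_commute)
  moreover have "(gF xg - gF xs) \<bullet> (gF xg - gF xs) / (2 * L) \<le> bregman F gF xs xg"
    using L_smooth_cocoercive[OF grad smooth L_pos nonneg, of xs xg]
    by (simp add: power2_norm_eq_inner norm_minus_commute)
  ultimately show ?thesis
    unfolding three_point_identity by linarith
qed

lemma dual_energy_nonneg:
  assumes "v \<in> range W"
  shows "0 \<le> dual_energy v"
proof -
  have "inverse (1 + \<eta> * \<mu>) * \<eta> * (v \<bullet> v) \<le> \<eta> * (v \<bullet> v)"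
    using eta_mu_pos eta_pos by (simp add: mult_left_le_one_le inverse_le_1_iff)
  also have "\<dots> \<le> \<eta> * (lambda_max W * (pinv W v \<bullet> v))"
    using inner_le_lambda_max_pinv[OF assms] eta_pos by simp
  finally show ?thesis
    unfolding dual_energy_eq inverse_theta by (simp add: algebra_simps)
qed

lemma dual_energy_le:
  assumes "v \<in> range W"
  shows "dual_energy v \<le> \<eta> * (lambda_max W / lambda_min_pos W) * (v \<bullet> v)"
proof -
  have lp: "0 < lambda_min_pos W"
    by (rule lambda_min_pos_pos[OF W_nonzero])
  have "dual_energy v \<le> \<eta> * lambda_max W * (pinv W v \<bullet> v)"
    unfolding dual_energy_eq inverse_theta using eta_mu_pos eta_pos by simp
  also have "\<dots> = \<eta> * (lambda_max W / lambda_min_pos W) * (lambda_min_pos W * (pinv W v \<bullet> v))"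
    using lp by simp
  also have "\<dots> \<le> \<eta> * (lambda_max W / lambda_min_pos W) * (v \<bullet> v)"
    by (intro mult_left_mono lambda_min_pos_pinv_le[OF W_nonzero assms]) (use eta_pos lambda_max_pos lp in simp)
  finally show ?thesis .
qed

lemma dual_error_sq_le:
  "(y1 - ys) \<bullet> (y1 - ys) \<le> 2 * ((1 / \<eta>)\<^sup>2 * ((x1 - x) \<bullet> (x1 - x)))
     + 4 * ((gF xg - gF xs) \<bullet> (gF xg - gF xs)) + 4 * (\<mu>\<^sup>2 * ((x1 - xg) \<bullet> (x1 - xg)))"
proof -
  have "y1 - ys = (- (1 / \<eta>)) *\<^sub>R (x1 - x) + (- (gF xg - gF xs)) + (- \<mu>) *\<^sub>R (x1 - xg)"
    using eta_pos by (simp add: primal_step algebra_simps)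
  then have "(y1 - ys) \<bullet> (y1 - ys) \<le> 2 * (((- (1 / \<eta>)) *\<^sub>R (x1 - x)) \<bullet> ((- (1 / \<eta>)) *\<^sub>R (x1 - x)))
      + 4 * ((- (gF xg - gF xs)) \<bullet> (- (gF xg - gF xs))) + 4 * (((- \<mu>) *\<^sub>R (x1 - xg)) \<bullet> ((- \<mu>) *\<^sub>R (x1 - xg)))"
    by (simp only: inner_sum3_le)
  then show ?thesis
    by (simp add: power2_eq_square del: minus_diff_eq)
qed

text \<open>\<open>w\<close> is the coefficient of \<open>\<parallel>y1 - ys\<parallel>\<^sup>2\<close> in \<open>\<delta> \<eta> dual_energy (y1 - ys)\<close> (by \<open>dual_energy_le\<close>);
  the hypotheses on \<open>\<delta>\<close> are exactly what makes it small against the three terms of \<open>dual_error_sq_le\<close>.\<close>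

lemma dual_error_weights:
  assumes "0 \<le> \<delta>" "\<delta> \<le> r / 4" "\<delta> \<le> \<tau> * r / 2" "\<eta> * \<mu> \<le> 1" "0 < r"
    and w_def: "w = \<delta> * \<eta> * (\<eta> / r)"
  shows "w * (2 * (1 / \<eta>)\<^sup>2) \<le> 1 / 2" "4 * w \<le> \<eta> / (2 * L)" "4 * w * \<mu>\<^sup>2 \<le> \<eta> * \<mu>"
proof -
  have "w * (2 * (1 / \<eta>)\<^sup>2) = 2 * \<delta> / r"
    unfolding w_def using eta_pos by (simp add: power2_eq_square field_simps)
  also have "\<dots> \<le> 1 / 2"
    using assms(2,5) by (simp add: field_simps)
  finally show "w * (2 * (1 / \<eta>)\<^sup>2) \<le> 1 / 2" .
  have "4 * w = \<eta> * (\<delta> / (\<tau> * r * L))"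
    unfolding w_def eta_def using L_pos tau_pos assms(5) by (simp add: field_simps)
  also have "\<dots> \<le> \<eta> * (1 / (2 * L))"
    using assms(3,5) tau_pos L_pos eta_pos by (intro mult_left_mono) (simp_all add: field_simps)
  finally show "4 * w \<le> \<eta> / (2 * L)"
    by simp
  have "4 * \<delta> * (\<eta> * \<mu>) \<le> 4 * \<delta>"
    using assms(1,4) by (simp add: mult_left_le)
  then have "4 * \<delta> * (\<eta> * \<mu>) / r \<le> 1"
    using assms(2,5) by (simp add: field_simps)
  then have "(\<eta> * \<mu>) * (4 * \<delta> * (\<eta> * \<mu>) / r) \<le> (\<eta> * \<mu>) * 1"
    using eta_mu_pos by (intro mult_left_mono) simp_all
  also have "(\<eta> * \<mu>) * (4 * \<delta> * (\<eta> * \<mu>) / r) = 4 * w * \<mu>\<^sup>2"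
    unfolding w_def using assms(5) by (simp add: power2_eq_square field_simps)
  finally show "4 * w * \<mu>\<^sup>2 \<le> \<eta> * \<mu>"
    by simp
qed

lemma dual_error_bound:
  assumes "0 \<le> \<delta>" "\<delta> \<le> r / 4" "\<delta> \<le> \<tau> * r / 2" "\<eta> * \<mu> \<le> 1"
    and r_def: "r = lambda_min_pos W / lambda_max W"
  shows "\<delta> * (\<eta> * dual_energy (y1 - ys))
    \<le> (x1 - x) \<bullet> (x1 - x) / 2 + \<eta> * ((gF xg - gF xs) \<bullet> (gF xg - gF xs) / (2 * L))
      + \<eta> * \<mu> * ((x1 - xg) \<bullet> (x1 - xg))"
proof -
  define P Q GG where "P = (x1 - x) \<bullet> (x1 - x)" and "Q = (x1 - xg) \<bullet> (x1 - xg)"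
    and "GG = (gF xg - gF xs) \<bullet> (gF xg - gF xs)"
  define w where "w = \<delta> * \<eta> * (\<eta> / r)"
  have r: "0 < r"
    unfolding r_def using lambda_min_pos_pos[OF W_nonzero] lambda_max_pos by simp
  note weights = dual_error_weights[OF assms(1-4) r w_def]
  have "\<delta> * (\<eta> * dual_energy (y1 - ys)) \<le> \<delta> * (\<eta> * ((\<eta> / r) * ((y1 - ys) \<bullet> (y1 - ys))))"
    using dual_energy_le[OF dual_errors_in_range(2)] assms(1) eta_pos
    unfolding r_def by (intro mult_left_mono) (simp_all add: field_simps)
  also have "\<dots> = w * ((y1 - ys) \<bullet> (y1 - ys))"
    unfolding w_def by simp
  also have "\<dots> \<le> w * (2 * ((1 / \<eta>)\<^sup>2 * P) + 4 * GG + 4 * (\<mu>\<^sup>2 * Q))"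
    unfolding P_def Q_def GG_def using assms(1) eta_pos r
    by (intro mult_left_mono dual_error_sq_le) (simp add: w_def)
  also have "\<dots> = (w * (2 * (1 / \<eta>)\<^sup>2)) * P + (4 * w) * GG + (4 * w * \<mu>\<^sup>2) * Q"
    by (simp add: algebra_simps)
  also have "\<dots> \<le> (1 / 2) * P + (\<eta> / (2 * L)) * GG + (\<eta> * \<mu>) * Q"
    by (intro add_mono mult_right_mono weights) (simp_all add: P_def Q_def GG_def)
  finally show ?thesis
    unfolding P_def Q_def GG_def by simp
qed

lemma primal_dual_descent:
  "(1 + \<eta> * \<mu>) * ((x1 - xs) \<bullet> (x1 - xs)) + \<eta> * dual_energy (y1 - ys)
     + \<eta> * ((2 - \<tau>) / \<tau> * bregman F gF xf1 xs)
   \<le> (x - xs) \<bullet> (x - xs) + \<eta> * dual_energy (y - ys) - \<eta> * dual_energy (y1 - y)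
     + \<eta> * (2 * (1 - \<tau>) / \<tau> * bregman F gF xf xs)
     - (1 - \<eta> * (2 * \<tau> * L / (2 - \<tau>))) * ((x1 - x) \<bullet> (x1 - x))
     - \<eta> * \<mu> * ((x1 - xg) \<bullet> (x1 - xg))
     - \<eta> * ((gF xg - gF xs) \<bullet> (gF xg - gF xs) / (2 * L))"
proof -
  define I0 I1 P Q E GG G1 where "I0 = (x - xs) \<bullet> (x - xs)" and "I1 = (x1 - xs) \<bullet> (x1 - xs)"
    and "P = (x1 - x) \<bullet> (x1 - x)" and "Q = (x1 - xg) \<bullet> (x1 - xg)" and "E = (xg - xs) \<bullet> (xg - xs)"
    and "GG = (gF xg - gF xs) \<bullet> (gF xg - gF xs) / (2 * L)" and "G1 = (gF xg - gF xs) \<bullet> (x1 - xs)"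
  define N0 N1 ND where "N0 = dual_energy (y - ys)" and "N1 = dual_energy (y1 - ys)"
    and "ND = dual_energy (y1 - y)"
  define D0 D1 where "D0 = bregman F gF xf xs" and "D1 = bregman F gF xf1 xs"
  define c k s where "c = 2 * (1 - \<tau>) / \<tau>" and "k = (2 - \<tau>) / \<tau>" and "s = 2 * \<tau> * L / (2 - \<tau>)"
  have "(1 + \<eta> * \<mu>) * I1 + \<eta> * N1 = I0 + \<eta> * N0 - \<eta> * ND - P - \<eta> * \<mu> * Q + \<eta> * \<mu> * E - 2 * \<eta> * G1"
    using distance_identity unfolding I0_def I1_def P_def Q_def E_def G1_def N0_def N1_def ND_def .
  moreover have "\<eta> * (- 2 * G1 + \<mu> * E) \<le> \<eta> * (- (k * D1) + c * D0 + s * P - GG)"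
    using mult_left_mono[OF gradient_term_le less_imp_le[OF eta_pos]]
    unfolding E_def G1_def D0_def D1_def P_def GG_def c_def k_def s_def .
  ultimately have "(1 + \<eta> * \<mu>) * I1 + \<eta> * N1 + \<eta> * (k * D1)
      \<le> I0 + \<eta> * N0 - \<eta> * ND + \<eta> * (c * D0) - (1 - \<eta> * s) * P - \<eta> * \<mu> * Q - \<eta> * GG"
    by (simp add: algebra_simps)
  then show ?thesis
    unfolding I0_def I1_def P_def Q_def GG_def N0_def N1_def ND_def D0_def D1_def c_def k_def s_def .
qed

lemma eta_potential_eq:
  "\<eta> * apapc_potential F gF W \<mu> \<eta> \<theta> \<tau> xs x' y' xf'
     = (x' - xs) \<bullet> (x' - xs) + \<eta> * dual_energy (y' - ys) + \<eta> * (2 * (1 - \<tau>) / \<tau> * bregman F gF xf' xs)"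
  unfolding apapc_potential_def using eta_pos by (simp add: power2_norm_eq_inner algebra_simps)

lemma potential_contraction:
  assumes "0 \<le> \<delta>" "\<delta> \<le> \<eta> * \<mu>" "2 * \<delta> * (1 - \<tau>) \<le> \<tau>"
    and "\<delta> \<le> r / 4" "\<delta> \<le> \<tau> * r / 2" "\<eta> * \<mu> \<le> 1"
    and "r = lambda_min_pos W / lambda_max W"
  shows "apapc_potential F gF W \<mu> \<eta> \<theta> \<tau> xs x1 y1 xf1
    \<le> inverse (1 + \<delta>) * apapc_potential F gF W \<mu> \<eta> \<theta> \<tau> xs x y xf"
proof -
  define I0 I1 P Q GG where "I0 = (x - xs) \<bullet> (x - xs)" and "I1 = (x1 - xs) \<bullet> (x1 - xs)"
    and "P = (x1 - x) \<bullet> (x1 - x)" and "Q = (x1 - xg) \<bullet> (x1 - xg)"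
    and "GG = (gF xg - gF xs) \<bullet> (gF xg - gF xs)"
  define N0 N1 where "N0 = dual_energy (y - ys)" and "N1 = dual_energy (y1 - ys)"
  define D0 D1 where "D0 = bregman F gF xf xs" and "D1 = bregman F gF xf1 xs"
  define c where "c = 2 * (1 - \<tau>) / \<tau>"
  have "\<delta> * I1 \<le> \<eta> * \<mu> * I1"
    unfolding I1_def using assms(2) by (rule mult_right_mono) simp
  moreover have "(1 + \<delta>) * (\<eta> * (c * D1)) \<le> \<eta> * ((2 - \<tau>) / \<tau> * D1)"
  proof -
    have "(1 + \<delta>) * (2 * (1 - \<tau>)) \<le> 2 - \<tau>"
      using assms(3) by (simp add: algebra_simps)
    then have "(1 + \<delta>) * c \<le> (2 - \<tau>) / \<tau>"
      unfolding c_def using tau_pos by (simp add: divide_right_mono)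
    moreover have "0 \<le> \<eta> * D1"
      unfolding D1_def using strongly_convex_bregman_nonneg[OF grad sconv] mu_pos eta_pos by simp
    ultimately show ?thesis
      using mult_right_mono by (fastforce simp: algebra_simps)
  qed
  moreover have "\<delta> * (\<eta> * N1) \<le> P / 2 + \<eta> * (GG / (2 * L)) + \<eta> * \<mu> * Q"
    unfolding N1_def P_def GG_def Q_def using dual_error_bound assms(1,4-7) by simp
  moreover have "0 \<le> \<eta> * dual_energy (y1 - y)"
    using dual_energy_nonneg[OF dual_step_in_range] eta_pos by simp
  moreover have "\<eta> * (2 * \<tau> * L / (2 - \<tau>)) \<le> 1 / 2"
    unfolding eta_def using tau_pos tau_le_1 L_pos by (simp add: field_simps)
  then have "(1 / 2) * P \<le> (1 - \<eta> * (2 * \<tau> * L / (2 - \<tau>))) * P"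
    unfolding P_def by (intro mult_right_mono) simp_all
  ultimately have descent: "(1 + \<delta>) * (I1 + \<eta> * N1 + \<eta> * (c * D1)) \<le> I0 + \<eta> * N0 + \<eta> * (c * D0)"
    using primal_dual_descent
    unfolding I0_def [symmetric] I1_def [symmetric] P_def [symmetric] Q_def [symmetric] GG_def [symmetric]
      N0_def [symmetric] N1_def [symmetric] D0_def [symmetric] D1_def [symmetric] c_def [symmetric]
    by (simp add: algebra_simps)
  have "(1 + \<delta>) * (\<eta> * apapc_potential F gF W \<mu> \<eta> \<theta> \<tau> xs x1 y1 xf1)
      \<le> \<eta> * apapc_potential F gF W \<mu> \<eta> \<theta> \<tau> xs x y xf"
    unfolding eta_potential_eq using descent unfolding I0_def I1_def N0_def N1_def D0_def D1_def c_def .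
  then have "\<eta> * ((1 + \<delta>) * apapc_potential F gF W \<mu> \<eta> \<theta> \<tau> xs x1 y1 xf1)
      \<le> \<eta> * apapc_potential F gF W \<mu> \<eta> \<theta> \<tau> xs x y xf"
    by (metis mult.left_commute)
  then have "(1 + \<delta>) * apapc_potential F gF W \<mu> \<eta> \<theta> \<tau> xs x1 y1 xf1
      \<le> apapc_potential F gF W \<mu> \<eta> \<theta> \<tau> xs x y xf"
    using eta_pos by (rule mult_left_le_imp_le)
  then show ?thesis
    using assms(1) by (simp add: field_simps)
qed

end

lemma exists_not_consensus:
  assumes "CARD('n::finite) \<ge> 2"
  shows "\<exists>u :: real^'d^'n. u \<notin> consensus"
proof -
  obtain i j :: 'n where "i \<noteq> j"
    using assms card_le_Suc0_iff_eq[of "UNIV :: 'n set"] by fastforce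
  then have "((\<chi> l. if l = i then (\<chi> _. 1) else 0) :: real^'d^'n) \<notin> consensus"
    unfolding consensus_def by (auto simp: vec_eq_iff)
  then show ?thesis ..
qed

lemma (in sym_psd_operator) neg_gradient_in_range_at_kernel_minimum:
  fixes F :: "'a \<Rightarrow> real"
  assumes grad: "is_gradient F gF" and smooth: "L_smooth L gF" and "0 \<le> L"
    and "W x = 0" and min: "\<And>u. W u = 0 \<Longrightarrow> F x \<le> F u"
  shows "- gF x \<in> range W"
proof (rule orthogonal_kernel_imp_range)
  fix u
  assume "W u = 0"
  have "gF x \<bullet> u = 0"
  proof (rule gradient_orthogonal_at_line_minimum[OF grad smooth \<open>0 \<le> L\<close>])
    fix t :: real
    show "F x \<le> F (x + t *\<^sub>R u)"
      using \<open>W x = 0\<close> \<open>W u = 0\<close> by (intro min) (simp add: add scaleR)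
  qed
  then show "- gF x \<bullet> u = 0"
    by simp
qed

lemma (in sym_psd_operator) dual_iterates_in_range:
  assumes "y 0 \<in> range W" and "\<And>j. y (Suc j) = y j + \<theta> *\<^sub>R W (z j)"
  shows "y j \<in> range W"
proof (induction j)
  case (Suc j)
  have "W (\<theta> *\<^sub>R z j) \<in> range W"
    by (rule rangeI)
  with Suc show ?case
    unfolding assms(2) using subspace_range by (simp add: subspace_add scaleR)
qed (rule assms(1))

theorem mainTheorem8:
  fixes F :: "real^'d^'n \<Rightarrow> real" and gF :: "real^'d^'n \<Rightarrow> real^'d^'n"
    and W :: "real^'d^'n \<Rightarrow> real^'d^'n"
    and \<mu> L \<eta> \<theta> \<alpha> \<tau> :: real
    and xstar :: "real^'d^'n"
    and x xf xg xh y :: "nat \<Rightarrow> real^'d^'n"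
    and k :: nat
  assumes n2: "CARD('n) \<ge> 2"
    and grad: "is_gradient F gF"
    and mu_pos: "0 < \<mu>" and mu_le_L: "\<mu> \<le> L"
    and sconv: "strongly_convex \<mu> F"
    and smooth: "L_smooth L gF"
    and W_lin: "linear W"
    and W_sym: "\<forall>u v. W u \<bullet> v = u \<bullet> W v"
    and W_psd: "\<forall>u. 0 \<le> W u \<bullet> u"
    and W_ker: "{u. W u = 0} = consensus"
    and xstar_mem: "xstar \<in> consensus"
    and xstar_min: "\<forall>u\<in>consensus. F xstar \<le> F u"
    and tau_def: "\<tau> = min 1 (1/2 * sqrt (\<mu> / L * (lambda_max W / lambda_min_pos W)))"
    and eta_def: "\<eta> = 1 / (4 * \<tau> * L)"
    and theta_def: "\<theta> = 1 / (\<eta> * lambda_max W)"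
    and alpha_def: "\<alpha> = \<mu>"
    and y0: "y 0 \<in> range W"
    and xf0: "xf 0 = x 0"
    and xg_def: "\<forall>j. xg j = \<tau> *\<^sub>R x j + (1 - \<tau>) *\<^sub>R xf j"
    and xh_def: "\<forall>j. xh j = inverse (1 + \<eta> * \<alpha>) *\<^sub>R
                   (x j - \<eta> *\<^sub>R (gF (xg j) - \<alpha> *\<^sub>R xg j + y j))"
    and y_def: "\<forall>j. y (Suc j) = y j + \<theta> *\<^sub>R W (xh j)"
    and x_def: "\<forall>j. x (Suc j) = inverse (1 + \<eta> * \<alpha>) *\<^sub>R
                   (x j - \<eta> *\<^sub>R (gF (xg j) - \<alpha> *\<^sub>R xg j + y (Suc j)))"
    and xf_def: "\<forall>j. xf (Suc j) = xg j + (2 * \<tau> / (2 - \<tau>)) *\<^sub>R (x (Suc j) - x j)"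
  shows "let ystar = - gF xstar;
             \<Psi> = (\<lambda>j. 1 / \<eta> * (norm (x j - xstar))\<^sup>2
                  + ((1 / \<theta>) *\<^sub>R pinv W (y j - ystar)
                      - (inverse (1 + \<eta> * \<alpha>) * \<eta>) *\<^sub>R (y j - ystar)) \<bullet> (y j - ystar)
                  + 2 * (1 - \<tau>) / \<tau> * bregman F gF (xf j) xstar)
         in \<Psi> (Suc k) \<le> inverse (1 + 1/4 * min (sqrt (\<mu> / L * (lambda_min_pos W / lambda_max W)))
                                        (lambda_min_pos W / lambda_max W)) * \<Psi> k"
proof -
  \<comment> \<open>The estimate concerns a single step.\<close>
  interpret sym_psd_operator W
    using W_lin W_sym W_psd by (intro sym_psd_operator.intro) auto
  have W_nonzero: "\<exists>u. W u \<noteq> 0"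
    using exists_not_consensus[OF n2] W_ker by blast
  note params = apapc_parameters[OF mu_pos mu_le_L lambda_min_pos_pos[OF W_nonzero]
      lambda_min_pos_le_lambda_max[OF W_nonzero] refl tau_def eta_def refl]
  have "- gF xstar \<in> range W"
    using mu_pos mu_le_L xstar_mem xstar_min W_ker
    by (intro neg_gradient_in_range_at_kernel_minimum[OF grad smooth]) auto
  moreover note dual_iterates_in_range[OF y0 y_def[rule_format]]
  ultimately interpret apapc_step W F gF \<mu> L \<eta> \<theta> \<tau> xstar "x k" "xf k" "y k" "xg k" "xh k" "y (Suc k)"
      "x (Suc k)" "xf (Suc k)"
    using grad smooth sconv mu_pos mu_le_L W_nonzero xstar_mem W_ker eta_def theta_def
      xg_def xh_def y_def x_def xf_def params(1,2)
    unfolding alpha_def by unfold_locales auto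
  have "apapc_potential F gF W \<mu> \<eta> \<theta> \<tau> xstar (x (Suc k)) (y (Suc k)) (xf (Suc k))
      \<le> inverse (1 + 1/4 * min (sqrt (\<mu> / L * (lambda_min_pos W / lambda_max W)))
                                (lambda_min_pos W / lambda_max W))
        * apapc_potential F gF W \<mu> \<eta> \<theta> \<tau> xstar (x k) (y k) (xf k)"
    using params(3-) by (intro potential_contraction) auto
  then show ?thesis
    unfolding Let_def alpha_def apapc_potential_def apapc_dual_energy_def .
qed

end
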